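(* Let $\varphi \in H^\infty$ with $\|\varphi\|_\infty \le 1$. (1) If $f \in H^2$ is $T_\varphi$-inner and $I$ is any inner function, then $If$ is $T_\varphi$-inner. (2) If $f \in H^2$ is $T_\varphi$-inner and $\Theta$ is any inner divisor of $f$ (i.e. $\Theta$ is inner and $f/\Theta \in H^2$), then $f/\Theta$ is $T_\varphi$-inner. (3) Every unit vector belonging to $\ker T_{\overline{\varphi}}$ is $T_\varphi$-inner.
   Context: $H^2$ is the Hardy space on the unit disk $\mathbb{D}$ with inner product $\langle f,g\rangle=\int_{\mathbb{T}} f\overline{g}\,dm$ ($m$ normalized Lebesgue measure on the unit circle $\mathbb{T}$; functions identified with their radial boundary values). An inner function is an $H^\infty$ function with unimodular boundary values a.e. For $\varphi\in H^\infty$, $T_\varphi f=\varphi f$ on $H^2$, and $T_{\overline{\varphi}} f = P(\overline{\varphi} f)$ where $P$ is the orthogonal (Riesz) projection of $L^2(\mathbb{T},m)$ onto $H^2$. A unit vector $f\in H^2$ is called $T_\varphi$-inner if $\langle T_\varphi^n f, f\rangle = 0$ for all $n\ge 1$. *)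

theory Defs
  imports "HOL-Analysis.Analysis"
begin

text \<open>Functions on the unit circle are parametrised by t in [0, 2 pi], i.e. f t stands
  for the boundary value at exp(i t). Normalised Lebesgue measure m is (1/(2 pi)) dt.\<close>

abbreviation circ :: "real measure" where
  "circ \<equiv> lebesgue_on {0..2*pi}"

definition cint :: "(real \<Rightarrow> complex) \<Rightarrow> complex" where
  "cint g = integral\<^sup>L circ g / complex_of_real (2*pi)"

definition L2 :: "(real \<Rightarrow> complex) \<Rightarrow> bool" where
  "L2 f \<longleftrightarrow> f \<in> borel_measurable circ \<and> integrable circ (\<lambda>t. (cmod (f t))^2)"

definition fcoeff :: "(real \<Rightarrow> complex) \<Rightarrow> int \<Rightarrow> complex" where
  "fcoeff f n = cint (\<lambda>t. f t * exp (- \<i> * of_int n * of_real t))"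

definition H2 :: "(real \<Rightarrow> complex) \<Rightarrow> bool" where
  "H2 f \<longleftrightarrow> L2 f \<and> (\<forall>n::int. n < 0 \<longrightarrow> fcoeff f n = 0)"

definition Hinf :: "(real \<Rightarrow> complex) \<Rightarrow> bool" where
  "Hinf f \<longleftrightarrow> H2 f \<and> (\<exists>C. AE t in circ. cmod (f t) \<le> C)"

definition inner_fun :: "(real \<Rightarrow> complex) \<Rightarrow> bool" where
  "inner_fun I \<longleftrightarrow> Hinf I \<and> (AE t in circ. cmod (I t) = 1)"

definition hip :: "(real \<Rightarrow> complex) \<Rightarrow> (real \<Rightarrow> complex) \<Rightarrow> complex" where
  "hip f g = cint (\<lambda>t. f t * cnj (g t))"

definition is_riesz_proj :: "(real \<Rightarrow> complex) \<Rightarrow> (real \<Rightarrow> complex) \<Rightarrow> bool" where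
  "is_riesz_proj g h \<longleftrightarrow> H2 h \<and> (\<forall>k. H2 k \<longrightarrow> hip (\<lambda>t. g t - h t) k = 0)"

text \<open>T_phi-inner: unit vector f in H^2 with <T_phi^n f, f> = 0 for n >= 1.\<close>
definition T_inner :: "(real \<Rightarrow> complex) \<Rightarrow> (real \<Rightarrow> complex) \<Rightarrow> bool" where
  "T_inner \<phi> f \<longleftrightarrow> H2 f \<and> hip f f = 1 \<and>
     (\<forall>n::nat. n \<ge> 1 \<longrightarrow> hip (\<lambda>t. (\<phi> t)^n * f t) f = 0)"

end

theory Submission
  imports Defs
begin

(* Multiplying f by a function u with |u| = 1 a.e. leaves every integrand phi^n f conj f
   unchanged, which gives (1) and (2) as soon as I f and f / Theta lie in H^2.  For (3),
   <phi^n f, f> is the conjugate of <conj phi f, phi^(n-1) f>, which vanishes because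
   conj phi f is orthogonal to H^2 and phi^(n-1) f lies in H^2.

   The analytic input is that H^infinity H^2 is contained in H^2.  Trigonometric
   polynomials are dense in L^2: indicators are approximated through Urysohn functions on
   the circle and Stone-Weierstrass, then simple functions, then dominated convergence.
   Dropping the negative frequencies of an approximant of f in H^2 only improves it
   (Pythagoras, since f is orthogonal to exp(-ikt)), and g times an analytic trigonometric
   polynomial has no negative frequencies; the remaining error is bounded by
   ||g||_infinity ||f - q||_1 <= ||g||_infinity ||f - q||_2. *)

section \<open>Exponentials and integration over the circle\<close>

definition fexp :: "int \<Rightarrow> real \<Rightarrow> complex" where
  "fexp k t = exp (\<i> * of_int k * of_real t)"

lemma fexp_add: "fexp j t * fexp k t = fexp (j + k) t"
  by (simp add: fexp_def exp_add[symmetric] algebra_simps)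

lemma cnj_fexp: "cnj (fexp k t) = fexp (- k) t"
  by (simp add: fexp_def exp_cnj)

lemma fexp_eq_cis: "fexp k t = cis (of_int k * t)"
  by (simp add: fexp_def cis_conv_exp mult.commute mult.left_commute)

lemma norm_fexp [simp]: "cmod (fexp k t) = 1"
  by (simp add: fexp_eq_cis)

lemma fexp_zero [simp]: "fexp 0 t = 1"
  by (simp add: fexp_def)

lemma continuous_on_fexp [continuous_intros]: "continuous_on A (fexp k)"
  unfolding fexp_def by (intro continuous_intros)

lemma finite_measure_circ: "finite_measure circ"
  by (rule finite_measure_lebesgue_on) simp

lemma measure_circ_space: "measure circ {0..2*pi} = 2*pi"
  by (simp add: measure_restrict_space)

lemma continuous_imp_measurable_circ:
  "continuous_on {0..2*pi} f \<Longrightarrow> f \<in> borel_measurable circ"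
  by (rule continuous_imp_measurable_on_sets_lebesgue) auto

lemma fexp_measurable [measurable]: "fexp k \<in> borel_measurable circ"
  by (intro continuous_imp_measurable_circ continuous_intros)

lemma integral_fexp: "integral\<^sup>L circ (fexp k) = (if k = 0 then 2*pi else 0)"
proof -
  have "integral\<^sup>L circ (fexp k) = integral {0..2*pi} (fexp k)"
    by (intro lebesgue_integral_eq_integral continuous_imp_integrable_real continuous_intros) auto
  also have "\<dots> = (if k = 0 then 2*pi else 0)"
  proof (cases "k = 0")
    case True
    then have "fexp k = (\<lambda>_. 1)" by (simp add: fun_eq_iff)
    with True show ?thesis by (simp add: scaleR_conv_of_real)
  next
    case False
    define F where "F t = fexp k t / (\<i> * of_int k)" for t
    have "(F has_vector_derivative fexp k t) (at t within {0..2*pi})" for t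
    proof -
      have "((\<lambda>z. exp (\<i> * of_int k * z) / (\<i> * of_int k)) has_field_derivative
          exp (\<i> * of_int k * of_real t)) (at (of_real t))"
        using False by (auto intro!: derivative_eq_intros)
      from has_vector_derivative_real_field[OF this] show ?thesis
        unfolding F_def fexp_def .
    qed
    then have "(fexp k has_integral F (2*pi) - F 0) {0..2*pi}"
      by (intro fundamental_theorem_of_calculus) auto
    moreover have "fexp k (2*pi) = 1"
      using cis_multiple_2pi[of "of_int k"] by (simp add: fexp_eq_cis mult.commute)
    ultimately show ?thesis
      using False by (simp add: F_def integral_unique fexp_def)
  qed
  finally show ?thesis .
qed

lemma cint_fexp: "cint (fexp k) = (if k = 0 then 1 else 0)"
  by (simp add: cint_def integral_fexp)

lemma cint_add:
  "integrable circ f \<Longrightarrow> integrable circ g \<Longrightarrow> cint (\<lambda>t. f t + g t) = cint f + cint g"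
  by (simp add: cint_def add_divide_distrib)

lemma cint_diff:
  "integrable circ f \<Longrightarrow> integrable circ g \<Longrightarrow> cint (\<lambda>t. f t - g t) = cint f - cint g"
  by (simp add: cint_def diff_divide_distrib)

lemma cint_cmult: "cint (\<lambda>t. c * f t) = c * cint f"
  by (simp add: cint_def)

lemma cint_cnj: "cint (\<lambda>t. cnj (f t)) = cnj (cint f)"
  by (simp add: cint_def)

lemma cint_cong_AE:
  "f \<in> borel_measurable circ \<Longrightarrow> g \<in> borel_measurable circ \<Longrightarrow> AE t in circ. f t = g t
    \<Longrightarrow> cint f = cint g"
  unfolding cint_def by (metis integral_cong_AE)

lemma norm_cint_le:
  "integrable circ f \<Longrightarrow> cmod (cint f) \<le> (\<integral>t. cmod (f t) \<partial>circ) / (2*pi)"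
  unfolding cint_def norm_divide by (simp add: divide_right_mono integral_norm_bound)

lemma fcoeff_eq_cint: "fcoeff f n = cint (\<lambda>t. f t * fexp (- n) t)"
  unfolding fcoeff_def fexp_def by (simp add: algebra_simps)

lemma hip_fexp_right: "hip f (fexp k) = fcoeff f k"
  by (simp add: hip_def fcoeff_eq_cint cnj_fexp)

section \<open>Square integrable functions\<close>

lemma norm_add_squared_le:
  fixes a b :: "'a::real_normed_vector"
  shows "(norm (a + b))\<^sup>2 \<le> 2 * (norm a)\<^sup>2 + 2 * (norm b)\<^sup>2"
proof -
  have "(norm (a + b))\<^sup>2 \<le> (norm a + norm b)\<^sup>2"
    by (simp add: norm_triangle_ineq power_mono)
  also have "\<dots> \<le> 2 * (norm a)\<^sup>2 + 2 * (norm b)\<^sup>2"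
    using sum_squares_ge_zero[of "norm a - norm b" 0] by (simp add: power2_eq_square algebra_simps)
  finally show ?thesis .
qed

lemma measurable_cnj [measurable]:
  "f \<in> borel_measurable M \<Longrightarrow> (\<lambda>x. cnj (f x)) \<in> borel_measurable M"
  by (rule borel_measurable_continuous_on[where f = cnj]) (auto intro: continuous_intros)

lemma L2_measurable [measurable_dest]: "L2 f \<Longrightarrow> f \<in> borel_measurable circ"
  by (simp add: L2_def)

lemma L2_bounded:
  assumes "f \<in> borel_measurable circ" "AE t in circ. cmod (f t) \<le> C"
  shows "L2 f"
  unfolding L2_def
proof
  show "integrable circ (\<lambda>t. (cmod (f t))\<^sup>2)"
  proof (rule Bochner_Integration.integrable_bound)
    show "integrable circ (\<lambda>t. C\<^sup>2)"
      by (rule finite_measure.integrable_const[OF finite_measure_circ])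
    show "AE t in circ. norm ((cmod (f t))\<^sup>2) \<le> norm (C\<^sup>2)"
      using assms(2) by eventually_elim (auto intro!: power_mono)
  qed (use assms(1) in measurable)
qed fact

lemma L2_add:
  assumes "L2 f" "L2 g"
  shows "L2 (\<lambda>t. f t + g t)"
  unfolding L2_def
proof
  have [measurable]: "f \<in> borel_measurable circ" "g \<in> borel_measurable circ"
    using assms by (auto simp: L2_def)
  show "(\<lambda>t. f t + g t) \<in> borel_measurable circ" by measurable
  show "integrable circ (\<lambda>t. (cmod (f t + g t))\<^sup>2)"
  proof (rule Bochner_Integration.integrable_bound)
    show "integrable circ (\<lambda>t. 2 * (cmod (f t))\<^sup>2 + 2 * (cmod (g t))\<^sup>2)"
      using assms by (auto simp: L2_def)
    show "AE t in circ. norm ((cmod (f t + g t))\<^sup>2) \<le> norm (2 * (cmod (f t))\<^sup>2 + 2 * (cmod (g t))\<^sup>2)"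
      using norm_add_squared_le[of "f _" "g _"] by auto
  qed measurable
qed

lemma L2_mult_bounded:
  assumes "L2 f" "g \<in> borel_measurable circ" "AE t in circ. cmod (g t) \<le> C"
  shows "L2 (\<lambda>t. g t * f t)"
  unfolding L2_def
proof
  have [measurable]: "f \<in> borel_measurable circ" "g \<in> borel_measurable circ"
    using assms by (auto simp: L2_def)
  show "(\<lambda>t. g t * f t) \<in> borel_measurable circ" by measurable
  show "integrable circ (\<lambda>t. (cmod (g t * f t))\<^sup>2)"
  proof (rule Bochner_Integration.integrable_bound)
    show "integrable circ (\<lambda>t. C\<^sup>2 * (cmod (f t))\<^sup>2)"
      using assms by (auto simp: L2_def)
    show "AE t in circ. norm ((cmod (g t * f t))\<^sup>2) \<le> norm (C\<^sup>2 * (cmod (f t))\<^sup>2)"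
      using assms(3)
      by eventually_elim (auto simp: norm_mult power_mult_distrib intro!: mult_right_mono power_mono)
  qed measurable
qed

lemma L2_cmult: "L2 f \<Longrightarrow> L2 (\<lambda>t. c * f t)"
  using L2_mult_bounded[of f "\<lambda>_. c" "cmod c"] by simp

lemma L2_diff: "L2 f \<Longrightarrow> L2 g \<Longrightarrow> L2 (\<lambda>t. f t - g t)"
  using L2_add[of f "\<lambda>t. - 1 * g t"] L2_cmult[of g "- 1"] by simp

lemma L2_imp_integrable:
  assumes "L2 f"
  shows "integrable circ f"
proof (rule integrable_norm_cancel)
  show "integrable circ (\<lambda>t. cmod (f t))"
    by (rule finite_measure.square_integrable_imp_integrable[OF finite_measure_circ])
      (use assms in \<open>auto simp: L2_def\<close>)
qed (use assms in \<open>simp add: L2_def\<close>)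

lemma Hinf_measurable: "Hinf f \<Longrightarrow> f \<in> borel_measurable circ"
  by (simp add: Hinf_def H2_def L2_def)

lemma integrable_mult_cnj:
  assumes "L2 f" "L2 g"
  shows "integrable circ (\<lambda>t. f t * cnj (g t))"
proof (rule Bochner_Integration.integrable_bound)
  show "integrable circ (\<lambda>t. (cmod (f t))\<^sup>2 + (cmod (g t))\<^sup>2)"
    using assms by (auto simp: L2_def)
  show "AE t in circ. norm (f t * cnj (g t)) \<le> norm ((cmod (f t))\<^sup>2 + (cmod (g t))\<^sup>2)"
  proof (rule AE_I2)
    fix t
    have "2 * (cmod (f t) * cmod (g t)) \<le> (cmod (f t))\<^sup>2 + (cmod (g t))\<^sup>2"
      using sum_squares_ge_zero[of "cmod (f t) - cmod (g t)" 0] by (simp add: power2_eq_square algebra_simps)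
    moreover have "0 \<le> cmod (f t) * cmod (g t)" by simp
    ultimately have "cmod (f t) * cmod (g t) \<le> (cmod (f t))\<^sup>2 + (cmod (g t))\<^sup>2" by linarith
    then show "norm (f t * cnj (g t)) \<le> norm ((cmod (f t))\<^sup>2 + (cmod (g t))\<^sup>2)"
      by (simp add: norm_mult)
  qed
qed (use assms in measurable)

lemma (in finite_measure) square_integral_le:
  fixes g :: "'a \<Rightarrow> real"
  assumes "integrable M g" "integrable M (\<lambda>x. (g x)\<^sup>2)"
  shows "(\<integral>x. g x \<partial>M)\<^sup>2 \<le> measure M (space M) * (\<integral>x. (g x)\<^sup>2 \<partial>M)"
proof (cases "measure M (space M) = 0")
  case True
  then have "AE x in M. g x = 0"
    by (intro AE_I'[of "space M"]) (auto simp: null_sets_def emeasure_eq_measure)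
  then show ?thesis by (simp add: integral_eq_zero_AE)
next
  case False
  define \<mu> where "\<mu> = measure M (space M)"
  define N where "N = (\<integral>x. g x \<partial>M)"
  define a where "a = N / \<mu>"
  have "\<mu> > 0" using False by (simp add: \<mu>_def zero_less_measure_iff)
  have "(\<lambda>x. (g x - a)\<^sup>2) = (\<lambda>x. ((g x)\<^sup>2 - 2 * a * g x) + a\<^sup>2)"
    by (simp add: power2_diff fun_eq_iff)
  moreover have "integrable M (\<lambda>x. (g x)\<^sup>2 - 2 * a * g x)"
    using assms by simp
  ultimately have "(\<integral>x. (g x - a)\<^sup>2 \<partial>M) = (\<integral>x. (g x)\<^sup>2 \<partial>M) - 2 * a * N + a\<^sup>2 * \<mu>"
    using assms by (simp add: N_def \<mu>_def)
  also have "\<dots> = (\<integral>x. (g x)\<^sup>2 \<partial>M) - N\<^sup>2 / \<mu>"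
  proof -
    have *: "X - 2 * (N / p) * N + (N / p)\<^sup>2 * p = X - N\<^sup>2 / p" if "p > 0" for X p :: real
      using that by (simp add: field_simps power2_eq_square)
    show ?thesis unfolding a_def by (rule *) fact
  qed
  finally have "N\<^sup>2 / \<mu> \<le> (\<integral>x. (g x)\<^sup>2 \<partial>M)"
    using integral_nonneg_AE[of "\<lambda>x. (g x - a)\<^sup>2" M] by simp
  then show ?thesis
    using \<open>\<mu> > 0\<close> by (simp add: N_def \<mu>_def pos_divide_le_eq mult.commute)
qed

section \<open>Trigonometric polynomials\<close>

inductive trig_poly_on :: "int set \<Rightarrow> (real \<Rightarrow> complex) \<Rightarrow> bool" for S where
  zero: "trig_poly_on S (\<lambda>t. 0)"
| monom: "k \<in> S \<Longrightarrow> trig_poly_on S (\<lambda>t. c * fexp k t)"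
| add: "trig_poly_on S p \<Longrightarrow> trig_poly_on S q \<Longrightarrow> trig_poly_on S (\<lambda>t. p t + q t)"

abbreviation trig_poly :: "(real \<Rightarrow> complex) \<Rightarrow> bool" where
  "trig_poly \<equiv> trig_poly_on UNIV"

lemma trig_poly_on_cmult: "trig_poly_on S p \<Longrightarrow> trig_poly_on S (\<lambda>t. c * p t)"
proof (induction rule: trig_poly_on.induct)
  case (monom k d)
  then show ?case using trig_poly_on.monom[of k S "c * d"] by (simp add: mult.assoc)
qed (auto simp: distrib_left intro: trig_poly_on.intros)

lemma trig_poly_const: "trig_poly (\<lambda>t. c)"
  using trig_poly_on.monom[of 0 UNIV c] by simp

lemma trig_poly_mult:
  assumes "trig_poly p" "trig_poly q"
  shows "trig_poly (\<lambda>t. p t * q t)"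
  using assms(1)
proof (induction rule: trig_poly_on.induct)
  case zero
  then show ?case by (simp add: trig_poly_on.zero)
next
  case (monom k c)
  from assms(2) show ?case
  proof (induction rule: trig_poly_on.induct)
    case (monom j d)
    then show ?case
      using trig_poly_on.monom[of "k + j" UNIV "c * d"] by (simp add: fexp_add[symmetric] ac_simps)
  qed (auto simp: distrib_left intro: trig_poly_on.intros)
qed (auto simp: distrib_right intro: trig_poly_on.intros)

lemma trig_poly_on_split:
  assumes "trig_poly_on (A \<union> B) p"
  obtains q r where "trig_poly_on A q" "trig_poly_on B r" "p = (\<lambda>t. q t + r t)"
proof -
  from assms have "\<exists>q r. trig_poly_on A q \<and> trig_poly_on B r \<and> p = (\<lambda>t. q t + r t)"
  proof (induction rule: trig_poly_on.induct)
    case zero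
    show ?case by (auto intro!: exI[of _ "\<lambda>t. 0"] trig_poly_on.zero)
  next
    case (monom k c)
    show ?case
    proof (cases "k \<in> A")
      case True
      then show ?thesis
        by (intro exI[of _ "\<lambda>t. c * fexp k t"] exI[of _ "\<lambda>t. 0"]) (auto intro: trig_poly_on.intros)
    next
      case False
      with monom have "k \<in> B" by blast
      then show ?thesis
        by (intro exI[of _ "\<lambda>t. 0"] exI[of _ "\<lambda>t. c * fexp k t"]) (auto intro: trig_poly_on.intros)
    qed
  next
    case (add p1 p2)
    then obtain q1 r1 q2 r2 where "trig_poly_on A q1" "trig_poly_on B r1" "p1 = (\<lambda>t. q1 t + r1 t)"
      "trig_poly_on A q2" "trig_poly_on B r2" "p2 = (\<lambda>t. q2 t + r2 t)"
      by blast
    then show ?case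
      by (intro exI[of _ "\<lambda>t. q1 t + q2 t"] exI[of _ "\<lambda>t. r1 t + r2 t"])
        (auto intro: trig_poly_on.add simp: algebra_simps)
  qed
  with that show ?thesis by blast
qed

lemma continuous_on_trig_poly_on: "trig_poly_on S p \<Longrightarrow> continuous_on A p"
  by (induction rule: trig_poly_on.induct) (auto intro!: continuous_intros)

lemma trig_poly_on_measurable: "trig_poly_on S p \<Longrightarrow> p \<in> borel_measurable circ"
  by (intro continuous_imp_measurable_circ continuous_on_trig_poly_on)

lemma trig_poly_on_bounded: "trig_poly_on S p \<Longrightarrow> \<exists>B. \<forall>t. cmod (p t) \<le> B"
proof (induction rule: trig_poly_on.induct)
  case zero
  show ?case by (auto intro: exI[of _ 0])
next
  case (monom k c)
  then show ?case by (auto simp: norm_mult)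
next
  case (add p q)
  then obtain B C where "\<forall>t. cmod (p t) \<le> B" "\<forall>t. cmod (q t) \<le> C" by blast
  then have "\<forall>t. cmod (p t + q t) \<le> B + C" by (metis add_mono norm_triangle_le)
  then show ?case by blast
qed

lemma L2_trig_poly_on: "trig_poly_on S p \<Longrightarrow> L2 p"
  using trig_poly_on_bounded[of S p] by (auto intro: L2_bounded trig_poly_on_measurable)

lemma L2_mult_trig_poly_on: "L2 g \<Longrightarrow> trig_poly_on S p \<Longrightarrow> L2 (\<lambda>t. g t * p t)"
  using trig_poly_on_bounded[of S p] L2_mult_bounded[of g p] trig_poly_on_measurable[of S p]
  by (auto simp: mult.commute)

lemma L2_mult_fexp: "L2 f \<Longrightarrow> L2 (\<lambda>t. f t * fexp k t)"
  using L2_mult_trig_poly_on[OF _ trig_poly_on.monom[of k UNIV 1]] by simp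

lemma fcoeff_add:
  "L2 f \<Longrightarrow> L2 g \<Longrightarrow> fcoeff (\<lambda>t. f t + g t) n = fcoeff f n + fcoeff g n"
  unfolding fcoeff_eq_cint distrib_right
  by (intro cint_add L2_imp_integrable L2_mult_fexp)

lemma fcoeff_diff:
  "L2 f \<Longrightarrow> L2 g \<Longrightarrow> fcoeff (\<lambda>t. f t - g t) n = fcoeff f n - fcoeff g n"
  unfolding fcoeff_eq_cint left_diff_distrib
  by (intro cint_diff L2_imp_integrable L2_mult_fexp)

lemma fcoeff_mult_fexp: "fcoeff (\<lambda>t. c * (f t * fexp k t)) n = c * fcoeff f (n - k)"
  unfolding fcoeff_eq_cint by (simp add: cint_cmult[symmetric] mult.assoc fexp_add)

lemma fcoeff_mult_trig_poly_on:
  assumes "L2 g" "trig_poly_on S p" "\<And>k. k \<in> S \<Longrightarrow> fcoeff g (n - k) = 0"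
  shows "fcoeff (\<lambda>t. g t * p t) n = 0"
  using assms(2,3)
proof (induction rule: trig_poly_on.induct)
  case zero
  then show ?case by (simp add: fcoeff_def cint_def)
next
  case (monom k c)
  then show ?case using fcoeff_mult_fexp[of c g k n] by (simp add: ac_simps)
next
  case (add p q)
  have "L2 (\<lambda>t. g t * p t)" "L2 (\<lambda>t. g t * q t)"
    using add.hyps assms(1) by (auto intro: L2_mult_trig_poly_on)
  then show ?case using add by (simp add: distrib_left fcoeff_add)
qed

lemma fcoeff_trig_poly_on:
  assumes "trig_poly_on S p" "n \<notin> S"
  shows "fcoeff p n = 0"
proof -
  have "fcoeff (\<lambda>t. 1 * p t) n = 0"
  proof (rule fcoeff_mult_trig_poly_on[OF L2_trig_poly_on[OF trig_poly_const] assms(1)])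
    fix k assume "k \<in> S"
    with assms(2) show "fcoeff (\<lambda>_. 1) (n - k) = 0"
      by (auto simp: fcoeff_eq_cint cint_fexp)
  qed
  then show ?thesis by simp
qed

lemma hip_add_right: "L2 f \<Longrightarrow> L2 g \<Longrightarrow> L2 h \<Longrightarrow> hip f (\<lambda>t. g t + h t) = hip f g + hip f h"
  unfolding hip_def complex_cnj_add distrib_left by (intro cint_add integrable_mult_cnj)

lemma hip_trig_poly_on_right:
  assumes "L2 f" "trig_poly_on S p" "\<And>k. k \<in> S \<Longrightarrow> fcoeff f k = 0"
  shows "hip f p = 0"
  using assms(2,3)
proof (induction rule: trig_poly_on.induct)
  case zero
  then show ?case by (simp add: hip_def cint_def)
next
  case (monom k c)
  have "hip f (\<lambda>t. c * fexp k t) = cnj c * hip f (fexp k)"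
    unfolding hip_def cint_cmult[symmetric] by (simp add: ac_simps)
  with monom show ?case by (simp add: hip_fexp_right)
next
  case (add p q)
  then show ?case using assms(1) by (simp add: hip_add_right L2_trig_poly_on)
qed

lemma integral_norm_diff_squared_orth:
  assumes "L2 F" "L2 B" "hip F B = 0"
  shows "(\<integral>t. (cmod (F t - B t))\<^sup>2 \<partial>circ)
    = (\<integral>t. (cmod (F t))\<^sup>2 \<partial>circ) + (\<integral>t. (cmod (B t))\<^sup>2 \<partial>circ)"
proof -
  define R where "R t = Re (F t * cnj (B t))" for t
  have int: "integrable circ (\<lambda>t. F t * cnj (B t))"
    using assms(1,2) by (rule integrable_mult_cnj)
  then have intR: "integrable circ R"
    unfolding R_def by (rule integrable_Re)
  have "(\<integral>t. R t \<partial>circ) = Re (\<integral>t. F t * cnj (B t) \<partial>circ)"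
    unfolding R_def by (rule integral_Re[OF int])
  also have "(\<integral>t. F t * cnj (B t) \<partial>circ) = 0"
    using assms(3) by (simp add: hip_def cint_def)
  finally have R0: "(\<integral>t. R t \<partial>circ) = 0" by simp
  have "(cmod (F t - B t))\<^sup>2 = (cmod (F t))\<^sup>2 + (cmod (B t))\<^sup>2 - 2 * R t" for t
    unfolding cmod_power2 R_def by (simp add: power2_diff algebra_simps)
  then show ?thesis
    using assms(1,2) intR R0
    by (simp add: L2_def Bochner_Integration.integral_add Bochner_Integration.integral_diff)
qed

(* Pythagoras: the negative-frequency part of p is orthogonal to f - q. *)
lemma H2_analytic_trig_poly_closer:
  assumes "H2 f" "trig_poly p"
  obtains q where "trig_poly_on {0..} q"
    "(\<integral>t. (cmod (f t - q t))\<^sup>2 \<partial>circ) \<le> (\<integral>t. (cmod (f t - p t))\<^sup>2 \<partial>circ)"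
proof -
  have "{0..} \<union> {..<0} = (UNIV :: int set)" by auto
  then have "trig_poly_on ({0..} \<union> {..<0}) p"
    using assms(2) by simp
  then obtain q r where q: "trig_poly_on {0..} q" and r: "trig_poly_on {..<0} r"
    and p: "p = (\<lambda>t. q t + r t)"
    by (rule trig_poly_on_split)
  have Lf: "L2 f" using assms(1) by (simp add: H2_def)
  have LF: "L2 (\<lambda>t. f t - q t)" and Lr: "L2 r"
    using Lf q r by (auto intro: L2_diff L2_trig_poly_on)
  have "hip (\<lambda>t. f t - q t) r = 0"
  proof (rule hip_trig_poly_on_right[OF LF r])
    fix k :: int assume "k \<in> {..<0}"
    then show "fcoeff (\<lambda>t. f t - q t) k = 0"
      using assms(1) Lf q by (simp add: fcoeff_diff L2_trig_poly_on fcoeff_trig_poly_on H2_def)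
  qed
  then have "(\<integral>t. (cmod (f t - p t))\<^sup>2 \<partial>circ)
      = (\<integral>t. (cmod (f t - q t))\<^sup>2 \<partial>circ) + (\<integral>t. (cmod (r t))\<^sup>2 \<partial>circ)"
    using integral_norm_diff_squared_orth[OF LF Lr] by (simp add: p algebra_simps)
  moreover have "0 \<le> (\<integral>t. (cmod (r t))\<^sup>2 \<partial>circ)"
    by (intro integral_nonneg_AE) simp
  ultimately show ?thesis using that[OF q] by simp
qed

section \<open>Density of trigonometric polynomials in L2\<close>

(* Kept in ennreal, so that the triangle inequality below needs no integrability. *)
definition l2_sqdist :: "(real \<Rightarrow> complex) \<Rightarrow> (real \<Rightarrow> complex) \<Rightarrow> ennreal" where
  "l2_sqdist u v = (\<integral>\<^sup>+t. ennreal ((cmod (u t - v t))\<^sup>2) \<partial>circ)"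

definition trig_approximable :: "(real \<Rightarrow> complex) \<Rightarrow> bool" where
  "trig_approximable u \<longleftrightarrow>
     u \<in> borel_measurable circ \<and> (\<forall>e>0. \<exists>p. trig_poly p \<and> l2_sqdist u p < ennreal e)"

lemma nn_integral_norm_add_squared_le:
  fixes a b :: "'a \<Rightarrow> 'b::{real_normed_vector, second_countable_topology}"
  assumes [measurable]: "a \<in> borel_measurable M" "b \<in> borel_measurable M"
  shows "(\<integral>\<^sup>+t. ennreal ((norm (a t + b t))\<^sup>2) \<partial>M)
    \<le> 2 * (\<integral>\<^sup>+t. ennreal ((norm (a t))\<^sup>2) \<partial>M) + 2 * (\<integral>\<^sup>+t. ennreal ((norm (b t))\<^sup>2) \<partial>M)"
proof -
  have "(\<integral>\<^sup>+t. ennreal ((norm (a t + b t))\<^sup>2) \<partial>M)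
      \<le> (\<integral>\<^sup>+t. 2 * ennreal ((norm (a t))\<^sup>2) + 2 * ennreal ((norm (b t))\<^sup>2) \<partial>M)"
  proof (intro nn_integral_mono)
    fix t
    have "ennreal ((norm (a t + b t))\<^sup>2) \<le> ennreal (2 * (norm (a t))\<^sup>2 + 2 * (norm (b t))\<^sup>2)"
      by (intro ennreal_leI norm_add_squared_le)
    then show "ennreal ((norm (a t + b t))\<^sup>2) \<le> 2 * ennreal ((norm (a t))\<^sup>2) + 2 * ennreal ((norm (b t))\<^sup>2)"
      by (simp add: ennreal_plus ennreal_mult)
  qed
  also have "\<dots> = 2 * (\<integral>\<^sup>+t. ennreal ((norm (a t))\<^sup>2) \<partial>M) + 2 * (\<integral>\<^sup>+t. ennreal ((norm (b t))\<^sup>2) \<partial>M)"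
    by (simp add: nn_integral_add nn_integral_cmult)
  finally show ?thesis .
qed

lemma l2_sqdist_triangle:
  assumes "u \<in> borel_measurable circ" "v \<in> borel_measurable circ" "w \<in> borel_measurable circ"
  shows "l2_sqdist u w \<le> 2 * l2_sqdist u v + 2 * l2_sqdist v w"
  using nn_integral_norm_add_squared_le[of "\<lambda>t. u t - v t" circ "\<lambda>t. v t - w t"] assms
  by (simp add: l2_sqdist_def)

lemma l2_sqdist_add_le:
  assumes "u \<in> borel_measurable circ" "v \<in> borel_measurable circ"
    "p \<in> borel_measurable circ" "q \<in> borel_measurable circ"
  shows "l2_sqdist (\<lambda>t. u t + v t) (\<lambda>t. p t + q t) \<le> 2 * l2_sqdist u p + 2 * l2_sqdist v q"
  using nn_integral_norm_add_squared_le[of "\<lambda>t. u t - p t" circ "\<lambda>t. v t - q t"] assms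
  by (simp add: l2_sqdist_def algebra_simps)

lemma l2_sqdist_le_uniform:
  assumes "\<And>t. t \<in> {0..2*pi} \<Longrightarrow> cmod (u t - v t) \<le> d"
  shows "l2_sqdist u v \<le> ennreal (d\<^sup>2 * (2*pi))"
proof -
  have "l2_sqdist u v \<le> (\<integral>\<^sup>+t. ennreal (d\<^sup>2) \<partial>circ)"
    unfolding l2_sqdist_def
    using assms by (intro nn_integral_mono ennreal_leI power_mono) auto
  also have "\<dots> = ennreal (d\<^sup>2 * (2*pi))"
    by (simp add: emeasure_restrict_space ennreal_mult)
  finally show ?thesis .
qed

lemma ennreal_twice_sum_less:
  assumes "x < ennreal (e / 4)" "y < ennreal (e / 4)" "0 < e"
  shows "2 * x + 2 * y < ennreal e"
proof -
  have "2 * ennreal (e / 4) = ennreal (e / 2)"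
    using ennreal_mult[of 2 "e / 4"] assms(3) by simp
  then have "2 * x < ennreal (e / 2)" "2 * y < ennreal (e / 2)"
    using ennreal_mult_strict_left_mono[OF assms(1), of 2]
      ennreal_mult_strict_left_mono[OF assms(2), of 2] by simp_all
  then show ?thesis using add_mono_ennreal by fastforce
qed

lemma trig_approximable_add:
  assumes "trig_approximable u" "trig_approximable v"
  shows "trig_approximable (\<lambda>t. u t + v t)"
  unfolding trig_approximable_def
proof (intro conjI allI impI)
  have [measurable]: "u \<in> borel_measurable circ" "v \<in> borel_measurable circ"
    using assms by (simp_all add: trig_approximable_def)
  show "(\<lambda>t. u t + v t) \<in> borel_measurable circ" by measurable
  fix e :: real assume "e > 0"
  then obtain p q where "trig_poly p" "l2_sqdist u p < ennreal (e / 4)"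
    "trig_poly q" "l2_sqdist v q < ennreal (e / 4)"
    using assms by (meson trig_approximable_def zero_less_divide_iff zero_less_numeral)
  moreover from this have "l2_sqdist (\<lambda>t. u t + v t) (\<lambda>t. p t + q t) < ennreal e"
    using \<open>e > 0\<close> by (intro le_less_trans[OF l2_sqdist_add_le ennreal_twice_sum_less])
      (auto intro: trig_poly_on_measurable)
  ultimately show "\<exists>r. trig_poly r \<and> l2_sqdist (\<lambda>t. u t + v t) r < ennreal e"
    by (blast intro: trig_poly_on.add)
qed

lemma trig_approximable_cmult:
  assumes "trig_approximable u"
  shows "trig_approximable (\<lambda>t. c * u t)"
  unfolding trig_approximable_def
proof (intro conjI allI impI)
  have [measurable]: "u \<in> borel_measurable circ"
    using assms by (simp add: trig_approximable_def)
  show "(\<lambda>t. c * u t) \<in> borel_measurable circ" by measurable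
  fix e :: real assume "e > 0"
  define K where "K = (cmod c)\<^sup>2 + 1"
  have K: "K > 0" by (simp add: K_def add_nonneg_pos)
  have "e / K > 0" using \<open>e > 0\<close> K by simp
  then obtain p where p: "trig_poly p" "l2_sqdist u p < ennreal (e / K)"
    using assms unfolding trig_approximable_def by blast
  have [measurable]: "p \<in> borel_measurable circ" using p(1) by (rule trig_poly_on_measurable)
  have "(\<lambda>t. ennreal ((cmod (u t - p t))\<^sup>2)) \<in> borel_measurable circ" by measurable
  then have "l2_sqdist (\<lambda>t. c * u t) (\<lambda>t. c * p t) = ennreal ((cmod c)\<^sup>2) * l2_sqdist u p"
    unfolding l2_sqdist_def
    by (simp add: right_diff_distrib[symmetric] norm_mult power_mult_distrib ennreal_mult
        nn_integral_cmult)
  also have "\<dots> \<le> ennreal K * l2_sqdist u p"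
    by (intro mult_right_mono ennreal_leI) (auto simp: K_def)
  also have "\<dots> < ennreal K * ennreal (e / K)"
    using p(2) K by (intro ennreal_mult_strict_left_mono) auto
  also have "\<dots> = ennreal e"
    using K \<open>e > 0\<close> by (simp add: ennreal_mult[symmetric])
  finally show "\<exists>q. trig_poly q \<and> l2_sqdist (\<lambda>t. c * u t) q < ennreal e"
    using trig_poly_on_cmult[OF p(1)] by blast
qed

lemma trig_approximable_sum:
  "finite S \<Longrightarrow> (\<And>i. i \<in> S \<Longrightarrow> trig_approximable (f i))
    \<Longrightarrow> trig_approximable (\<lambda>t. \<Sum>i\<in>S. f i t)"
proof (induction S rule: finite_induct)
  case empty
  have "l2_sqdist (\<lambda>t. 0) (\<lambda>t. 0) = 0" by (simp add: l2_sqdist_def)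
  then show ?case
    by (auto simp: trig_approximable_def intro!: exI[of _ "\<lambda>t. 0"] trig_poly_on.zero)
next
  case (insert i S)
  then show ?case by (simp add: trig_approximable_add)
qed

lemma trig_approximable_cong:
  assumes "trig_approximable u" "\<And>t. t \<in> {0..2*pi} \<Longrightarrow> u t = v t"
  shows "trig_approximable v"
proof -
  have "l2_sqdist u p = l2_sqdist v p" for p
    unfolding l2_sqdist_def using assms(2) by (intro nn_integral_cong) simp
  moreover have "u \<in> borel_measurable circ \<longleftrightarrow> v \<in> borel_measurable circ"
    using assms(2) by (intro measurable_cong) simp
  ultimately show ?thesis using assms(1) by (simp add: trig_approximable_def)
qed

lemma trig_poly_uniform_approx_circle:
  assumes "continuous_on (sphere 0 1) \<psi>" "e > 0"
  obtains p where "trig_poly p" "\<And>t. cmod (complex_of_real (\<psi> (cis t)) - p t) < e"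
proof -
  let ?P = "\<lambda>q. continuous_on (sphere 0 1) q \<and> trig_poly (\<lambda>t. complex_of_real (q (cis t)))"
  have "\<exists>q. ?P q \<and> (\<forall>x \<in> sphere 0 1. \<bar>\<psi> x - q x\<bar> < e)"
  proof (rule Stone_Weierstrass_HOL[where P = ?P])
    show "?P (\<lambda>x. c)" for c
      by (simp add: trig_poly_const)
    show "?P (\<lambda>x. q x + r x)" if "?P q \<and> ?P r" for q r
      using that by (auto intro: continuous_on_add trig_poly_on.add)
    show "?P (\<lambda>x. q x * r x)" if "?P q \<and> ?P r" for q r
      using that by (auto intro: continuous_on_mult trig_poly_mult)
    have "(\<lambda>t. complex_of_real (Re (cis t))) = (\<lambda>t. 1/2 * fexp 1 t + 1/2 * fexp (-1) t)"
      by (simp add: fun_eq_iff fexp_def Euler field_simps)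
    then have re: "?P Re"
      using trig_poly_on.add[OF trig_poly_on.monom[of 1 UNIV "1/2"] trig_poly_on.monom[of "-1" UNIV "1/2"]]
      by (auto intro: continuous_intros)
    have "(\<lambda>t. complex_of_real (Im (cis t))) = (\<lambda>t. 1/(2*\<i>) * fexp 1 t + -1/(2*\<i>) * fexp (-1) t)"
      by (simp add: fun_eq_iff fexp_def Euler field_simps)
    then have im: "?P Im"
      using trig_poly_on.add[OF trig_poly_on.monom[of 1 UNIV "1/(2*\<i>)"]
          trig_poly_on.monom[of "-1" UNIV "-1/(2*\<i>)"]]
      by (auto intro: continuous_intros)
    show "\<exists>q. ?P q \<and> q x \<noteq> q y" if "x \<in> sphere 0 1 \<and> y \<in> sphere 0 1 \<and> x \<noteq> y" for x y
      using that complex_eqI re im by blast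
  qed (use assms in auto)
  then obtain q where q: "?P q" "\<And>x. x \<in> sphere 0 1 \<Longrightarrow> \<bar>\<psi> x - q x\<bar> < e"
    by blast
  have "cmod (complex_of_real (\<psi> (cis t)) - complex_of_real (q (cis t))) < e" for t
    using q(2)[of "cis t"] by (simp flip: of_real_diff)
  with q(1) that show ?thesis by blast
qed

(* T avoids the endpoints, so that cis is injective on T \<union> C. *)
lemma lebesgue_regular_on_circle:
  assumes "A \<in> sets circ" "e > 0"
  obtains T C where "compact T" "compact C" "T \<subseteq> A \<inter> {0<..<2*pi}" "C \<subseteq> {0..2*pi}" "C \<inter> A = {}"
    "{0..2*pi} - (T \<union> C) \<in> sets lebesgue" "emeasure lebesgue ({0..2*pi} - (T \<union> C)) < ennreal e"
proof -
  have A: "A \<in> sets lebesgue" "A \<subseteq> {0..2*pi}"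
    using assms(1) by (auto simp: sets_restrict_space_iff)
  define A' where "A' = A \<inter> {0<..<2*pi}"
  have A': "A' \<in> sets lebesgue" unfolding A'_def by (rule sets.Int[OF A(1)]) simp
  obtain T where T: "closed T" "T \<subseteq> A'" "emeasure lebesgue (A' - T) < ennreal (e/2)"
    using sets_lebesgue_inner_closed[OF A'] assms(2) by (metis half_gt_zero)
  obtain U where U: "open U" "A \<subseteq> U" "emeasure lebesgue (U - A) < ennreal (e/2)"
    using sets_lebesgue_outer_open[OF A(1)] assms(2) by (metis half_gt_zero)
  define C where "C = {0..2*pi} - U"
  have "T = {0..2*pi} \<inter> T" using T(2) by (auto simp: A'_def)
  then have "compact T" using compact_Int_closed[OF compact_Icc[of 0 "2*pi"] T(1)] by simp
  moreover have "compact C"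
    using compact_Int_closed[OF compact_Icc closed_Compl[OF U(1)]] by (simp add: C_def Diff_eq)
  moreover have T_leb: "T \<in> sets lebesgue" and U_leb: "U \<in> sets lebesgue"
    using T(1) U(1) by (metis borel_closed borel_open sets_completionI_sets sets_lborel)+
  moreover have bad_leb: "{0..2*pi} - (T \<union> C) \<in> sets lebesgue"
    using T_leb U_leb unfolding C_def by (intro sets.Diff sets.Un) simp_all
  moreover have "emeasure lebesgue ({0..2*pi} - (T \<union> C)) < ennreal e"
  proof -
    have "{0..2*pi} - (T \<union> C) \<subseteq> (U - A) \<union> ((A' - T) \<union> {0, 2*pi})"
      using A(2) by (auto simp: C_def A'_def)
    moreover have meas: "U - A \<in> sets lebesgue" "A' - T \<in> sets lebesgue" "{0, 2*pi::real} \<in> sets lebesgue"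
      using A A' T_leb U_leb by auto
    ultimately have "emeasure lebesgue ({0..2*pi} - (T \<union> C))
        \<le> emeasure lebesgue ((U - A) \<union> ((A' - T) \<union> {0, 2*pi}))"
      by (intro emeasure_mono sets.Un)
    also have "\<dots> \<le> emeasure lebesgue (U - A) + emeasure lebesgue ((A' - T) \<union> {0, 2*pi})"
      using meas by (intro emeasure_subadditive sets.Un)
    also have "\<dots> \<le> emeasure lebesgue (U - A) + emeasure lebesgue (A' - T)"
      using emeasure_subadditive[OF meas(2,3)] by (simp add: emeasure_lborel_countable add_left_mono)
    also have "\<dots> < ennreal (e/2 + e/2)"
      using T(3) U(3) by (rule add_mono_ennreal[rotated])
    finally show ?thesis by simp
  qed
  moreover have "T \<subseteq> A \<inter> {0<..<2*pi}" "C \<subseteq> {0..2*pi}" "C \<inter> A = {}"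
    using T(2) U(2) by (auto simp: A'_def C_def)
  ultimately show ?thesis using that by blast
qed

lemma trig_approximable_continuous_circle:
  assumes "continuous_on (sphere 0 1) \<psi>"
  shows "trig_approximable (\<lambda>t. complex_of_real (\<psi> (cis t)))"
  unfolding trig_approximable_def
proof (intro conjI allI impI)
  have "continuous_on {0..2*pi} (\<lambda>t. complex_of_real (\<psi> (cis t)))"
    by (intro continuous_intros continuous_on_compose2[OF assms]) auto
  then show "(\<lambda>t. complex_of_real (\<psi> (cis t))) \<in> borel_measurable circ"
    by (rule continuous_imp_measurable_circ)
  fix e :: real assume "e > 0"
  define d where "d = sqrt (e / (4*pi))"
  have d: "d > 0" "d\<^sup>2 * (2*pi) < e"
    using \<open>e > 0\<close> by (simp_all add: d_def)
  obtain p where p: "trig_poly p" "\<And>t. cmod (complex_of_real (\<psi> (cis t)) - p t) < d"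
    using trig_poly_uniform_approx_circle[OF assms d(1)] by blast
  have "l2_sqdist (\<lambda>t. complex_of_real (\<psi> (cis t))) p \<le> ennreal (d\<^sup>2 * (2*pi))"
    using p(2) by (intro l2_sqdist_le_uniform less_imp_le)
  also have "\<dots> < ennreal e"
    using d \<open>e > 0\<close> by (simp add: ennreal_lessI)
  finally show "\<exists>p. trig_poly p \<and> l2_sqdist (\<lambda>t. complex_of_real (\<psi> (cis t))) p < ennreal e"
    using p(1) by blast
qed

lemma cis_eq_imp_eq:
  assumes "cis a = cis b" "0 < a" "a < 2*pi" "0 \<le> b" "b \<le> 2*pi"
  shows "a = b"
  using exp_complex_eqI[of "\<i> * of_real a" "\<i> * of_real b"] assms by (auto simp: cis_conv_exp)

lemma Urysohn_circle:
  assumes "compact T" "compact C" "T \<subseteq> {0<..<2*pi}" "C \<subseteq> {0..2*pi}" "T \<inter> C = {}"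
  obtains \<psi> :: "complex \<Rightarrow> real" where "continuous_on UNIV \<psi>" "\<And>x. 0 \<le> \<psi> x \<and> \<psi> x \<le> 1"
    "\<And>t. t \<in> T \<Longrightarrow> \<psi> (cis t) = 1" "\<And>t. t \<in> C \<Longrightarrow> \<psi> (cis t) = 0"
proof -
  have disjoint: "cis ` T \<inter> cis ` C = {}"
  proof (rule ccontr)
    assume "cis ` T \<inter> cis ` C \<noteq> {}"
    then obtain a b where "a \<in> T" "b \<in> C" "cis a = cis b" by auto
    moreover from this assms(3,4) have "0 < a" "a < 2*pi" "0 \<le> b" "b \<le> 2*pi"
      by auto
    ultimately have "a \<in> T \<inter> C"
      using cis_eq_imp_eq[of a b] by auto
    with assms(5) show False by blast
  qed
  have "continuous_on S cis" for S
    by (intro continuous_intros)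
  then have "closed (cis ` T)" "closed (cis ` C)"
    using assms(1,2) by (simp_all add: compact_imp_closed compact_continuous_image)
  then obtain \<psi> :: "complex \<Rightarrow> real" where \<psi>: "continuous_on UNIV \<psi>"
    "\<And>x. \<psi> x \<in> closed_segment 1 0" "\<And>x. x \<in> cis ` T \<Longrightarrow> \<psi> x = 1"
    "\<And>x. x \<in> cis ` C \<Longrightarrow> \<psi> x = 0"
    by (rule Urysohn[OF _ _ disjoint, where a = "1::real" and b = 0]) auto
  show ?thesis
  proof (rule that)
    show "0 \<le> \<psi> x \<and> \<psi> x \<le> 1" for x
      using \<psi>(2)[of x] by (auto simp: closed_segment_eq_real_ivl)
  qed (use \<psi>(1,3,4) in auto)
qed

lemma indicator_close_to_continuous_circle:
  assumes "A \<in> sets circ" "e > 0"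
  obtains \<psi> where "continuous_on (sphere 0 1) \<psi>"
    "l2_sqdist (\<lambda>t. complex_of_real (indicator A t)) (\<lambda>t. complex_of_real (\<psi> (cis t))) < ennreal e"
proof -
  obtain T C where TC: "compact T" "compact C" "T \<subseteq> A \<inter> {0<..<2*pi}" "C \<subseteq> {0..2*pi}"
    "C \<inter> A = {}" "{0..2*pi} - (T \<union> C) \<in> sets lebesgue"
    "emeasure lebesgue ({0..2*pi} - (T \<union> C)) < ennreal e"
    using lebesgue_regular_on_circle[OF assms] by blast
  define B where "B = {0..2*pi} - (T \<union> C)"
  have T: "T \<subseteq> {0<..<2*pi}" "T \<inter> C = {}"
    using TC(3,5) by auto
  obtain \<psi> :: "complex \<Rightarrow> real" where \<psi>: "continuous_on UNIV \<psi>" "\<And>x. 0 \<le> \<psi> x \<and> \<psi> x \<le> 1"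
    "\<And>t. t \<in> T \<Longrightarrow> \<psi> (cis t) = 1" "\<And>t. t \<in> C \<Longrightarrow> \<psi> (cis t) = 0"
    by (rule Urysohn_circle[OF TC(1,2) T(1) TC(4) T(2)]) auto
  have "ennreal ((cmod (complex_of_real (indicator A t) - complex_of_real (\<psi> (cis t))))\<^sup>2)
      \<le> indicator B t" if "t \<in> {0..2*pi}" for t
  proof (cases "t \<in> B")
    case True
    have "\<bar>indicator A t - \<psi> (cis t)\<bar> \<le> (1::real)"
      using \<psi>(2)[of "cis t"] by (auto simp: indicator_def)
    then have "\<bar>indicator A t - \<psi> (cis t)\<bar>\<^sup>2 \<le> (1::real)"
      by (simp add: abs_square_le_1)
    with True show ?thesis by (simp flip: of_real_diff)
  next
    case False
    with that have "t \<in> T \<or> t \<in> C" by (auto simp: B_def)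
    then have "indicator A t = \<psi> (cis t)"
      using TC(3,5) \<psi>(3,4) by (auto simp: indicator_def)
    then show ?thesis by simp
  qed
  then have "l2_sqdist (\<lambda>t. complex_of_real (indicator A t)) (\<lambda>t. complex_of_real (\<psi> (cis t)))
      \<le> (\<integral>\<^sup>+t. indicator B t \<partial>circ)"
    unfolding l2_sqdist_def by (intro nn_integral_mono) simp
  also have "\<dots> = emeasure lebesgue B"
    using TC(6) by (simp add: B_def sets_restrict_space_iff emeasure_restrict_space)
  also have "\<dots> < ennreal e"
    using TC(7) by (simp add: B_def)
  finally show ?thesis
    using that continuous_on_subset[OF \<psi>(1)] by blast
qed

lemma trig_approximable_indicator:
  assumes "A \<in> sets circ"
  shows "trig_approximable (\<lambda>t. complex_of_real (indicator A t))"
  unfolding trig_approximable_def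
proof (intro conjI allI impI)
  show meas: "(\<lambda>t. complex_of_real (indicator A t)) \<in> borel_measurable circ"
    by (rule measurable_compose[OF borel_measurable_indicator[OF assms] borel_measurable_of_real])
  fix e :: real assume "e > 0"
  then have "e / 4 > 0" by simp
  then obtain \<psi> where \<psi>: "continuous_on (sphere 0 1) \<psi>"
    "l2_sqdist (\<lambda>t. complex_of_real (indicator A t)) (\<lambda>t. complex_of_real (\<psi> (cis t))) < ennreal (e/4)"
    using indicator_close_to_continuous_circle[OF assms] by blast
  from \<open>e / 4 > 0\<close> obtain p where p: "trig_poly p" "l2_sqdist (\<lambda>t. complex_of_real (\<psi> (cis t))) p < ennreal (e/4)"
    using trig_approximable_continuous_circle[OF \<psi>(1)] unfolding trig_approximable_def by blast
  have "(\<lambda>t. complex_of_real (\<psi> (cis t))) \<in> borel_measurable circ"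
    using trig_approximable_continuous_circle[OF \<psi>(1)] by (simp add: trig_approximable_def)
  then have "l2_sqdist (\<lambda>t. complex_of_real (indicator A t)) p
      \<le> 2 * l2_sqdist (\<lambda>t. complex_of_real (indicator A t)) (\<lambda>t. complex_of_real (\<psi> (cis t)))
        + 2 * l2_sqdist (\<lambda>t. complex_of_real (\<psi> (cis t))) p"
    by (rule l2_sqdist_triangle[OF meas _ trig_poly_on_measurable[OF p(1)]])
  also have "\<dots> < ennreal e"
    by (rule ennreal_twice_sum_less[OF \<psi>(2) p(2) \<open>e > 0\<close>])
  finally show "\<exists>p. trig_poly p \<and> l2_sqdist (\<lambda>t. complex_of_real (indicator A t)) p < ennreal e"
    using p(1) by blast
qed

lemma trig_approximable_simple:
  assumes "simple_function circ F"
  shows "trig_approximable (F :: real \<Rightarrow> complex)"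
proof -
  let ?S = "F ` space circ" and ?A = "\<lambda>y. F -` {y} \<inter> space circ"
  have "trig_approximable (\<lambda>t. y * complex_of_real (indicator (?A y) t))" for y
    by (intro trig_approximable_cmult trig_approximable_indicator simple_functionD(2)[OF assms])
  then have "trig_approximable (\<lambda>t. \<Sum>y\<in>?S. y * complex_of_real (indicator (?A y) t))"
    by (intro trig_approximable_sum simple_functionD(1)[OF assms])
  then show ?thesis
  proof (rule trig_approximable_cong)
    fix t :: real assume "t \<in> {0..2*pi}"
    then have "F t = (\<Sum>y\<in>?S. indicator (?A y) t *\<^sub>R y)"
      by (intro simple_function_indicator_representation_banach[OF assms]) simp
    also have "\<dots> = (\<Sum>y\<in>?S. y * complex_of_real (indicator (?A y) t))"
      by (simp add: scaleR_conv_of_real mult.commute)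
    finally show "(\<Sum>y\<in>?S. y * complex_of_real (indicator (?A y) t)) = F t" ..
  qed
qed

lemma L2_simple_function_approx:
  assumes "L2 u"
  obtains F where "\<And>i. simple_function circ (F i)" "(\<lambda>i. l2_sqdist u (F i)) \<longlonglongrightarrow> 0"
proof -
  have [measurable]: "u \<in> borel_measurable circ" using assms by (simp add: L2_def)
  from borel_measurable_implies_sequence_metric[OF \<open>u \<in> borel_measurable circ\<close>, of 0]
  obtain F where F: "\<forall>i. simple_function circ (F i)" "\<forall>t\<in>space circ. (\<lambda>i. F i t) \<longlonglongrightarrow> u t"
    "\<forall>i. \<forall>t\<in>space circ. dist (F i t) 0 \<le> 2 * dist (u t) 0"
    by (elim exE conjE)
  have [measurable]: "F i \<in> borel_measurable circ" for i
    using F(1) by (simp add: borel_measurable_simple_function)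
  define g where "g i t = (cmod (u t - F i t))\<^sup>2" for i t
  have "(\<lambda>i. (\<integral>\<^sup>+t. norm (0 - g i t) \<partial>circ)) \<longlonglongrightarrow> 0"
  proof (rule nn_integral_dominated_convergence_norm[where w = "\<lambda>t. 9 * (cmod (u t))\<^sup>2"])
    show "AE t in circ. norm (g i t) \<le> 9 * (cmod (u t))\<^sup>2" for i
    proof (rule AE_I2)
      fix t assume t: "t \<in> space circ"
      have "cmod (F i t) \<le> 2 * cmod (u t)"
        using F(3) t by (simp add: dist_norm)
      then have "cmod (u t - F i t) \<le> 3 * cmod (u t)"
        using norm_triangle_ineq4[of "u t" "F i t"] by simp
      then have "(cmod (u t - F i t))\<^sup>2 \<le> (3 * cmod (u t))\<^sup>2"
        by (rule power_mono) simp
      then show "norm (g i t) \<le> 9 * (cmod (u t))\<^sup>2" by (simp add: g_def power_mult_distrib)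
    qed
    have "(\<integral>\<^sup>+t. ennreal (9 * (cmod (u t))\<^sup>2) \<partial>circ)
        = ennreal (\<integral>t. 9 * (cmod (u t))\<^sup>2 \<partial>circ)"
      using assms by (intro nn_integral_eq_integral) (auto simp: L2_def)
    then show "(\<integral>\<^sup>+t. ennreal (9 * (cmod (u t))\<^sup>2) \<partial>circ) < \<infinity>" by simp
    show "AE t in circ. (\<lambda>i. g i t) \<longlonglongrightarrow> 0"
    proof (rule AE_I2)
      fix t assume "t \<in> space circ"
      then have "(\<lambda>i. (cmod (u t - F i t))\<^sup>2) \<longlonglongrightarrow> (cmod (u t - u t))\<^sup>2"
        using F(2) by (intro tendsto_intros) simp
      then show "(\<lambda>i. g i t) \<longlonglongrightarrow> 0" by (simp add: g_def)
    qed
    show "g i \<in> borel_measurable circ" for i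
      unfolding g_def by measurable
  qed measurable
  then have "(\<lambda>i. l2_sqdist u (F i)) \<longlonglongrightarrow> 0"
    by (simp add: l2_sqdist_def g_def)
  with F(1) show ?thesis by (intro that) auto
qed

lemma trig_approximable_L2:
  assumes "L2 u"
  shows "trig_approximable u"
  unfolding trig_approximable_def
proof (intro conjI allI impI)
  show u: "u \<in> borel_measurable circ" using assms by (simp add: L2_def)
  fix e :: real assume "e > 0"
  obtain F where F: "\<And>i. simple_function circ (F i)" "(\<lambda>i. l2_sqdist u (F i)) \<longlonglongrightarrow> 0"
    using L2_simple_function_approx[OF assms] by blast
  have "eventually (\<lambda>i. l2_sqdist u (F i) < ennreal (e/4)) sequentially"
    using \<open>e > 0\<close> by (intro order_tendstoD(2)[OF F(2)]) simp
  then obtain i where i: "l2_sqdist u (F i) < ennreal (e/4)"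
    by (auto dest: eventually_happens)
  have "trig_approximable (F i)" by (rule trig_approximable_simple[OF F(1)])
  moreover have "e/4 > 0" using \<open>e > 0\<close> by simp
  ultimately obtain p where p: "trig_poly p" "l2_sqdist (F i) p < ennreal (e/4)"
    unfolding trig_approximable_def by blast
  have "l2_sqdist u p \<le> 2 * l2_sqdist u (F i) + 2 * l2_sqdist (F i) p"
    by (rule l2_sqdist_triangle[OF u borel_measurable_simple_function[OF F(1)]
          trig_poly_on_measurable[OF p(1)]])
  also have "\<dots> < ennreal e"
    by (rule ennreal_twice_sum_less[OF i p(2) \<open>e > 0\<close>])
  finally show "\<exists>p. trig_poly p \<and> l2_sqdist u p < ennreal e"
    using p(1) by blast
qed

lemma L2_trig_poly_dense:
  assumes "L2 u" "e > 0"
  obtains p where "trig_poly p" "(\<integral>t. (cmod (u t - p t))\<^sup>2 \<partial>circ) < e"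
proof -
  obtain p where p: "trig_poly p" "l2_sqdist u p < ennreal e"
    using trig_approximable_L2[OF assms(1)] assms(2) unfolding trig_approximable_def by blast
  have "L2 (\<lambda>t. u t - p t)" using L2_diff[OF assms(1) L2_trig_poly_on[OF p(1)]] .
  then have "l2_sqdist u p = ennreal (\<integral>t. (cmod (u t - p t))\<^sup>2 \<partial>circ)"
    unfolding l2_sqdist_def by (intro nn_integral_eq_integral) (auto simp: L2_def)
  moreover have "0 \<le> (\<integral>t. (cmod (u t - p t))\<^sup>2 \<partial>circ)"
    by (intro integral_nonneg_AE) simp
  ultimately show ?thesis
    using p that by (simp add: ennreal_less_iff)
qed

section \<open>Bounded analytic multipliers\<close>

lemma H2_analytic_trig_poly_dense:
  assumes "H2 f" "e > 0"
  obtains q where "trig_poly_on {0..} q" "(\<integral>t. (cmod (f t - q t))\<^sup>2 \<partial>circ) < e"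
proof -
  have "L2 f" using assms(1) by (simp add: H2_def)
  then obtain p where p: "trig_poly p" "(\<integral>t. (cmod (f t - p t))\<^sup>2 \<partial>circ) < e"
    using assms(2) by (rule L2_trig_poly_dense)
  obtain q where q: "trig_poly_on {0..} q"
    "(\<integral>t. (cmod (f t - q t))\<^sup>2 \<partial>circ) \<le> (\<integral>t. (cmod (f t - p t))\<^sup>2 \<partial>circ)"
    using H2_analytic_trig_poly_closer[OF assms(1) p(1)] by blast
  show ?thesis using that[OF q(1)] q(2) p(2) by linarith
qed

lemma norm_fcoeff_mult_le:
  assumes "L2 F" "g \<in> borel_measurable circ" "AE t in circ. cmod (g t) \<le> C" "0 \<le> C"
  shows "cmod (fcoeff (\<lambda>t. g t * F t) n) \<le> C * sqrt ((\<integral>t. (cmod (F t))\<^sup>2 \<partial>circ) / (2*pi))"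
proof -
  define N where "N = (\<integral>t. cmod (F t) \<partial>circ)"
  define Q where "Q = (\<integral>t. (cmod (F t))\<^sup>2 \<partial>circ)"
  have [measurable]: "F \<in> borel_measurable circ" using assms(1) by (simp add: L2_def)
  have L: "L2 (\<lambda>t. g t * F t * fexp (- n) t)"
    by (intro L2_mult_fexp L2_mult_bounded[OF assms(1-3)])
  have "(\<integral>t. cmod (g t * F t * fexp (- n) t) \<partial>circ) \<le> (\<integral>t. C * cmod (F t) \<partial>circ)"
  proof (rule integral_mono_AE)
    show "integrable circ (\<lambda>t. cmod (g t * F t * fexp (- n) t))"
      using L2_imp_integrable[OF L] by simp
    show "integrable circ (\<lambda>t. C * cmod (F t))"
      using L2_imp_integrable[OF assms(1)] by simp
    show "AE t in circ. cmod (g t * F t * fexp (- n) t) \<le> C * cmod (F t)"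
      using assms(3) by eventually_elim (auto simp: norm_mult intro!: mult_right_mono)
  qed
  then have "cmod (fcoeff (\<lambda>t. g t * F t) n) \<le> C * (N / (2*pi))"
    using norm_cint_le[OF L2_imp_integrable[OF L]]
    unfolding fcoeff_eq_cint N_def by (simp add: divide_right_mono order_trans)
  moreover have "N / (2*pi) \<le> sqrt (Q / (2*pi))"
  proof (rule real_le_rsqrt)
    have "N\<^sup>2 \<le> 2*pi * Q"
      using finite_measure.square_integral_le[OF finite_measure_circ, of "\<lambda>t. cmod (F t)"]
        L2_imp_integrable[OF assms(1)] assms(1)
      by (simp add: N_def Q_def L2_def measure_circ_space)
    then have "N\<^sup>2 / (2*pi) / (2*pi) \<le> 2*pi * Q / (2*pi) / (2*pi)"
      by (intro divide_right_mono) auto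
    then show "(N / (2*pi))\<^sup>2 \<le> Q / (2*pi)"
      by (simp add: power_divide power2_eq_square)
  qed
  ultimately show ?thesis
    unfolding Q_def using assms(4) by (meson mult_left_mono order_trans)
qed

lemma norm_negative_fcoeff_mult_le:
  assumes "H2 g" "H2 f" "AE t in circ. cmod (g t) \<le> C" "0 \<le> C" "n < 0" "e > 0"
  shows "cmod (fcoeff (\<lambda>t. g t * f t) n) \<le> C * sqrt (e / (2*pi))"
proof -
  have Lg: "L2 g" and Lf: "L2 f" using assms(1,2) by (simp_all add: H2_def)
  have mg: "g \<in> borel_measurable circ" using Lg by (simp add: L2_def)
  obtain q where q: "trig_poly_on {0..} q" "(\<integral>t. (cmod (f t - q t))\<^sup>2 \<partial>circ) < e"
    using H2_analytic_trig_poly_dense[OF assms(2,6)] by blast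
  have LF: "L2 (\<lambda>t. f t - q t)" using L2_diff[OF Lf L2_trig_poly_on[OF q(1)]] .
  have "fcoeff (\<lambda>t. g t * q t) n = 0"
    by (rule fcoeff_mult_trig_poly_on[OF Lg q(1)]) (use assms(1,5) in \<open>auto simp: H2_def\<close>)
  moreover have "fcoeff (\<lambda>t. g t * f t) n
      = fcoeff (\<lambda>t. g t * (f t - q t)) n + fcoeff (\<lambda>t. g t * q t) n"
    using fcoeff_add[OF L2_mult_bounded[OF LF mg assms(3)] L2_mult_trig_poly_on[OF Lg q(1)]]
    by (simp add: algebra_simps)
  ultimately have "fcoeff (\<lambda>t. g t * f t) n = fcoeff (\<lambda>t. g t * (f t - q t)) n"
    by simp
  also have "cmod \<dots> \<le> C * sqrt ((\<integral>t. (cmod (f t - q t))\<^sup>2 \<partial>circ) / (2*pi))"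
    by (rule norm_fcoeff_mult_le[OF LF mg assms(3,4)])
  also have "\<dots> \<le> C * sqrt (e / (2*pi))"
    using q(2) assms(4) by (intro mult_left_mono real_sqrt_le_mono divide_right_mono) auto
  finally show ?thesis .
qed

lemma H2_mult_Hinf:
  assumes g: "Hinf g" and f: "H2 f"
  shows "H2 (\<lambda>t. g t * f t)"
proof -
  obtain C0 where C0: "AE t in circ. cmod (g t) \<le> C0" using g by (auto simp: Hinf_def)
  define C where "C = max C0 0"
  have C: "AE t in circ. cmod (g t) \<le> C" "0 \<le> C"
    using C0 by (auto simp: C_def elim: eventually_mono)
  have Hg: "H2 g" using g by (simp add: Hinf_def)
  have "fcoeff (\<lambda>t. g t * f t) n = 0" if "n < 0" for n
  proof -
    have "((\<lambda>e. C * sqrt (e / (2*pi))) \<longlongrightarrow> C * sqrt (0 / (2*pi))) (at_right 0)"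
      by (intro tendsto_intros) simp
    then have "cmod (fcoeff (\<lambda>t. g t * f t) n) \<le> C * sqrt (0 / (2*pi))"
      using norm_negative_fcoeff_mult_le[OF Hg f C \<open>n < 0\<close>]
      by (intro tendsto_lowerbound) (auto intro: eventually_mono[OF eventually_at_right_less])
    then show ?thesis by simp
  qed
  moreover have "L2 (\<lambda>t. g t * f t)"
    using f L2_mult_bounded[OF _ Hinf_measurable[OF g] C(1)] by (simp add: H2_def)
  ultimately show ?thesis by (simp add: H2_def)
qed

lemma H2_mult_power_Hinf: "Hinf \<phi> \<Longrightarrow> H2 f \<Longrightarrow> H2 (\<lambda>t. (\<phi> t)^j * f t)"
proof (induction j)
  case (Suc j)
  then show ?case using H2_mult_Hinf[of \<phi> "\<lambda>t. (\<phi> t)^j * f t"] by (simp add: mult.assoc)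
qed simp

section \<open>T-inner vectors\<close>

lemma hip_mult_unimodular:
  assumes [measurable]: "h \<in> borel_measurable circ" "f \<in> borel_measurable circ"
    "(\<lambda>t. u t * f t) \<in> borel_measurable circ"
    and "AE t in circ. cmod (u t) = 1"
  shows "hip (\<lambda>t. h t * (u t * f t)) (\<lambda>t. u t * f t) = hip (\<lambda>t. h t * f t) f"
  unfolding hip_def
proof (rule cint_cong_AE)
  show "AE t in circ. h t * (u t * f t) * cnj (u t * f t) = h t * f t * cnj (f t)"
    using assms(4)
  proof eventually_elim
    case (elim t)
    then have "u t * cnj (u t) = 1" using complex_norm_square[of "u t"] by simp
    then show ?case by (simp add: algebra_simps)
  qed
qed measurable

lemma T_inner_mult_unimodular:
  assumes "\<phi> \<in> borel_measurable circ" "T_inner \<phi> f" "H2 (\<lambda>t. u t * f t)"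
    "AE t in circ. cmod (u t) = 1"
  shows "T_inner \<phi> (\<lambda>t. u t * f t)"
proof -
  have "f \<in> borel_measurable circ" "(\<lambda>t. u t * f t) \<in> borel_measurable circ"
    using assms(2,3) by (auto simp: T_inner_def H2_def L2_def)
  moreover have "(\<lambda>t. (\<phi> t)^n) \<in> borel_measurable circ" for n
    using assms(1) by measurable
  ultimately have "hip (\<lambda>t. (\<phi> t)^n * (u t * f t)) (\<lambda>t. u t * f t) = hip (\<lambda>t. (\<phi> t)^n * f t) f" for n
    using hip_mult_unimodular[OF _ _ _ assms(4)] by blast
  from this[of 0] this assms(2,3) show ?thesis
    by (simp add: T_inner_def)
qed

lemma T_inner_if_Toeplitz_adjoint_kernel:
  assumes "Hinf \<phi>" "H2 f" "hip f f = 1" "is_riesz_proj (\<lambda>t. cnj (\<phi> t) * f t) (\<lambda>t. 0)"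
  shows "T_inner \<phi> f"
  unfolding T_inner_def
proof (intro conjI allI impI assms(2,3))
  fix n :: nat assume "n \<ge> 1"
  then obtain j where j: "n = Suc j" by (cases n) auto
  have "hip (\<lambda>t. cnj (\<phi> t) * f t - 0) (\<lambda>t. (\<phi> t)^j * f t) = 0"
    using assms(4) H2_mult_power_Hinf[OF assms(1,2)] by (simp add: is_riesz_proj_def)
  moreover have "hip (\<lambda>t. cnj (\<phi> t) * f t - 0) (\<lambda>t. (\<phi> t)^j * f t)
      = cnj (hip (\<lambda>t. (\<phi> t)^n * f t) f)"
    unfolding hip_def cint_cnj[symmetric] j by (simp add: algebra_simps)
  ultimately show "hip (\<lambda>t. (\<phi> t)^n * f t) f = 0" by simp
qed

theorem proposition2p2:
  fixes \<phi> :: "real \<Rightarrow> complex"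
  assumes "Hinf \<phi>" and "AE t in circ. cmod (\<phi> t) \<le> 1"
  shows "(\<forall>f I. T_inner \<phi> f \<and> inner_fun I \<longrightarrow> T_inner \<phi> (\<lambda>t. I t * f t))
       \<and> (\<forall>f \<Theta>. T_inner \<phi> f \<and> inner_fun \<Theta> \<and> H2 (\<lambda>t. f t / \<Theta> t)
              \<longrightarrow> T_inner \<phi> (\<lambda>t. f t / \<Theta> t))
       \<and> (\<forall>f. H2 f \<and> hip f f = 1 \<and> is_riesz_proj (\<lambda>t. cnj (\<phi> t) * f t) (\<lambda>t. 0)
              \<longrightarrow> T_inner \<phi> f)"
proof -
  have \<phi>: "\<phi> \<in> borel_measurable circ" using assms(1) by (rule Hinf_measurable)
  show ?thesis
  proof (intro conjI allI impI)
    fix f I assume "T_inner \<phi> f \<and> inner_fun I"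
    then show "T_inner \<phi> (\<lambda>t. I t * f t)"
      by (intro T_inner_mult_unimodular[OF \<phi>] H2_mult_Hinf) (auto simp: T_inner_def inner_fun_def)
  next
    fix f \<Theta> assume "T_inner \<phi> f \<and> inner_fun \<Theta> \<and> H2 (\<lambda>t. f t / \<Theta> t)"
    then have "T_inner \<phi> (\<lambda>t. inverse (\<Theta> t) * f t)"
      by (intro T_inner_mult_unimodular[OF \<phi>])
        (auto simp: inner_fun_def divide_inverse_commute norm_inverse elim: eventually_mono)
    then show "T_inner \<phi> (\<lambda>t. f t / \<Theta> t)"
      by (simp add: divide_inverse_commute)
  next
    fix f assume "H2 f \<and> hip f f = 1 \<and> is_riesz_proj (\<lambda>t. cnj (\<phi> t) * f t) (\<lambda>t. 0)"
    then show "T_inner \<phi> f"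
      using T_inner_if_Toeplitz_adjoint_kernel[OF assms(1)] by blast
  qed
qed

end
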